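(* Let $\nu\in\mathcal{S}^{n-1}$, $\Pi_\nu(0):=\{x:-1\le x\cdot\nu\le0\}$, $\Gamma_N:=\{x\cdot\nu=0\}$, $\Gamma_D:=\{x\cdot\nu=-1\}$, and for $x\in\mathbb{R}^n$ write $x'=x-(x\cdot\nu)\nu$. Let $R,\varepsilon>0$ and $\Sigma_R:=\Pi_\nu(0)\cap\{|x'|\le R\}$. Suppose $\omega$ satisfies in the viscosity sense: (a) $-\mathcal{P}^+(D^2\omega)\le0$ and $-\mathcal{P}^-(D^2\omega)\ge0$ in $\Sigma_R$; (b) $\partial\omega/\partial\nu=0$ on $\Gamma_N\cap\Sigma_R$; (c) $\omega=0$ on $\Gamma_D\cap\Sigma_R$; (d) $|\omega|\le R^{2-\varepsilon}$. Then $|\omega|\le CR^{-\varepsilon}$ in $\Pi_\nu(0)\cap\{|x'|\le1\}$, where $C>0$ is a constant depending only on $n,\lambda,\Lambda$.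
   Context: Fix $0<\lambda<\Lambda$. For a real symmetric matrix $M$ with eigenvalues $e_i$, $\mathcal{P}^+(M)=\Lambda\sum_{e_i>0}e_i+\lambda\sum_{e_i<0}e_i$ and $\mathcal{P}^-(M)=\lambda\sum_{e_i>0}e_i+\Lambda\sum_{e_i<0}e_i$ (Pucci extremal operators). *)

theory Defs
  imports "HOL-Analysis.Analysis" "HOL-Computational_Algebra.Polynomial"
begin

text \<open>Characteristic polynomial det(X I - M) of a square real matrix, and its
  eigenvalues (with algebraic multiplicity) as the multiset of its real roots.
  For symmetric M the characteristic polynomial splits over the reals, so this
  multiset is exactly the multiset of eigenvalues.\<close>
definition charpoly :: "real^'n^'n \<Rightarrow> real poly" where
  "charpoly M = det (\<chi> i j. (if i = j then [:0, 1:] else 0) - [:M $ i $ j:])"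

definition eigenvalues_mset :: "real^'n^'n \<Rightarrow> real multiset" where
  "eigenvalues_mset M = proots (charpoly M)"

definition pucci_plus :: "real \<Rightarrow> real \<Rightarrow> real^'n^'n \<Rightarrow> real" where
  "pucci_plus lam Lam M =
     Lam * sum_mset (filter_mset (\<lambda>e. e > 0) (eigenvalues_mset M))
   + lam * sum_mset (filter_mset (\<lambda>e. e < 0) (eigenvalues_mset M))"

definition pucci_minus :: "real \<Rightarrow> real \<Rightarrow> real^'n^'n \<Rightarrow> real" where
  "pucci_minus lam Lam M =
     lam * sum_mset (filter_mset (\<lambda>e. e > 0) (eigenvalues_mset M))
   + Lam * sum_mset (filter_mset (\<lambda>e. e < 0) (eigenvalues_mset M))"

definition C2_test :: "(real^'n \<Rightarrow> real) \<Rightarrow> (real^'n \<Rightarrow> real^'n) \<Rightarrow> (real^'n \<Rightarrow> real^'n^'n) \<Rightarrow> bool" where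
  "C2_test phi Dphi D2phi \<longleftrightarrow>
     (\<forall>x. (phi has_derivative (\<lambda>h. Dphi x \<bullet> h)) (at x)) \<and>
     (\<forall>x. (Dphi has_derivative (\<lambda>h. D2phi x *v h)) (at x)) \<and>
     continuous_on UNIV D2phi"

definition touches_above :: "(real^'n) set \<Rightarrow> (real^'n \<Rightarrow> real) \<Rightarrow> (real^'n \<Rightarrow> real) \<Rightarrow> real^'n \<Rightarrow> bool" where
  "touches_above S u phi x0 \<longleftrightarrow>
     (\<exists>\<delta>>0. \<forall>y\<in>S. dist y x0 < \<delta> \<longrightarrow> u y - phi y \<le> u x0 - phi x0)"

definition touches_below :: "(real^'n) set \<Rightarrow> (real^'n \<Rightarrow> real) \<Rightarrow> (real^'n \<Rightarrow> real) \<Rightarrow> real^'n \<Rightarrow> bool" where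
  "touches_below S u phi x0 \<longleftrightarrow>
     (\<exists>\<delta>>0. \<forall>y\<in>S. dist y x0 < \<delta> \<longrightarrow> u y - phi y \<ge> u x0 - phi x0)"

definition slab :: "real^'n \<Rightarrow> (real^'n) set" where
  "slab \<nu> = {x. -1 \<le> x \<bullet> \<nu> \<and> x \<bullet> \<nu> \<le> 0}"

definition GammaN :: "real^'n \<Rightarrow> (real^'n) set" where
  "GammaN \<nu> = {x. x \<bullet> \<nu> = 0}"

definition GammaD :: "real^'n \<Rightarrow> (real^'n) set" where
  "GammaD \<nu> = {x. x \<bullet> \<nu> = -1}"

definition tang :: "real^'n \<Rightarrow> real^'n \<Rightarrow> real^'n" where
  "tang \<nu> x = x - (x \<bullet> \<nu>) *\<^sub>R \<nu>"

definition SigmaR :: "real^'n \<Rightarrow> real \<Rightarrow> (real^'n) set" where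
  "SigmaR \<nu> R = slab \<nu> \<inter> {x. norm (tang \<nu> x) \<le> R}"

definition visc_sub_Pplus :: "real \<Rightarrow> real \<Rightarrow> (real^'n) set \<Rightarrow> (real^'n \<Rightarrow> real) \<Rightarrow> bool" where
  "visc_sub_Pplus lam Lam S w \<longleftrightarrow>
     (\<forall>x0\<in>interior S. \<forall>phi Dphi D2phi. C2_test phi Dphi D2phi \<and> touches_above S w phi x0
        \<longrightarrow> - pucci_plus lam Lam (D2phi x0) \<le> 0)"

definition visc_super_Pminus :: "real \<Rightarrow> real \<Rightarrow> (real^'n) set \<Rightarrow> (real^'n \<Rightarrow> real) \<Rightarrow> bool" where
  "visc_super_Pminus lam Lam S w \<longleftrightarrow>
     (\<forall>x0\<in>interior S. \<forall>phi Dphi D2phi. C2_test phi Dphi D2phi \<and> touches_below S w phi x0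
        \<longrightarrow> - pucci_minus lam Lam (D2phi x0) \<ge> 0)"

text \<open>Viscosity sense of the homogeneous Neumann condition dw/dnu = 0 on the points B
  of the boundary of S, nu being the outward normal there (sub- and supersolution).\<close>
definition visc_neumann :: "real^'n \<Rightarrow> (real^'n) set \<Rightarrow> (real^'n) set \<Rightarrow> (real^'n \<Rightarrow> real) \<Rightarrow> bool" where
  "visc_neumann \<nu> S B w \<longleftrightarrow>
     (\<forall>x0\<in>B. \<forall>phi Dphi D2phi. C2_test phi Dphi D2phi \<and> touches_above S w phi x0
        \<longrightarrow> Dphi x0 \<bullet> \<nu> \<le> 0) \<and>
     (\<forall>x0\<in>B. \<forall>phi Dphi D2phi. C2_test phi Dphi D2phi \<and> touches_below S w phi x0
        \<longrightarrow> Dphi x0 \<bullet> \<nu> \<ge> 0)"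

end

theory Submission imports Defs begin

text \<open>The barrier psi(x) = a |x'|^2 + K/2 (1 - (x\<cdot>\<nu>)^2) + a (1 + x\<cdot>\<nu>) has the constant Hessian
  2a I - (2a + K) \<nu>\<nu>^T, so P+(D^2 psi) = 2a\<Lambda>(n-1) - \<lambda>K < 0 once K is a large multiple of a\<Lambda>n/\<lambda>;
  its normal derivative on \<Gamma>_N is a > 0, it is nonnegative on \<Gamma>_D and at least a R^2 on the
  lateral boundary |x'| = R. At a maximum point of \<omega> - psi over the compact set \<Sigma>_R every
  alternative other than \<omega> \<le> psi contradicts one of the conditions (a)-(d); symmetrically
  -psi \<le> \<omega>. The choice a = R^(-\<epsilon>) turns (d) into |\<omega>| \<le> a R^2, and psi \<le> 2a + K/2 = C R^(-\<epsilon>)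
  where |x'| \<le> 1.\<close>

definition scaled_id_plus_rank_one :: "real \<Rightarrow> real \<Rightarrow> real^'n \<Rightarrow> real^'n^'n" where
  "scaled_id_plus_rank_one \<alpha> \<gamma> \<nu> = (\<chi> i j. \<alpha> * (if i = j then 1 else 0) + \<gamma> * \<nu>$i * \<nu>$j)"

lemma poly_det:
  fixes P :: "real poly^'n^'n"
  shows "poly (det P) x = det (\<chi> i j. poly (P$i$j) x)"
  unfolding det_def by (simp add: poly_sum poly_prod)

lemma det_scaled_id_minus_rank_one:
  fixes \<nu> :: "real^'n"
  assumes "norm \<nu> = 1"
  shows "det (\<chi> i j. (if i = j then d else 0) - \<gamma> * \<nu>$i * \<nu>$j) = d ^ (CARD('n) - 1) * (d - \<gamma>)"
proof -
  obtain A where A: "orthogonal_matrix A" "A *v (axis k 1) = \<nu>"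
    using orthogonal_matrix_exists_basis assms by metis
  define D :: "real^'n^'n" where "D = (\<chi> i j. if i = j then (if i = k then d - \<gamma> else d) else 0)"
  have Ak: "A$i$k = \<nu>$i" for i
    using A(2) by (auto simp: matrix_vector_mult_def axis_def vec_eq_iff if_distrib cong: if_cong)
  have rows_orthonormal: "(\<Sum>l\<in>UNIV. A$i$l * A$j$l) = (if i = j then 1 else 0)" for i j
  proof -
    have "(A ** transpose A) $ i $ j = mat 1 $ i $ j" using A(1) by (simp add: orthogonal_matrix_def)
    thus ?thesis by (simp add: matrix_matrix_mult_def transpose_def mat_def)
  qed
  have AD: "A ** D = (\<chi> i l. A$i$l * D$l$l)"
    by (simp add: vec_eq_iff matrix_matrix_mult_def D_def if_distrib cong: if_cong)
  have diagonalized: "(\<chi> i j. (if i = j then d else 0) - \<gamma> * \<nu>$i * \<nu>$j) = A ** D ** transpose A"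
  proof -
    have "(A ** D ** transpose A) $ i $ j = (if i = j then d else 0) - \<gamma> * \<nu>$i * \<nu>$j" for i j
    proof -
      have "(A ** D ** transpose A) $ i $ j = (\<Sum>l\<in>UNIV. A$i$l * D$l$l * A$j$l)"
        unfolding AD by (simp add: matrix_matrix_mult_def transpose_def)
      also have "\<dots> = (\<Sum>l\<in>UNIV. d * (A$i$l * A$j$l) - (if l = k then \<gamma> * A$i$l * A$j$l else 0))"
        by (intro sum.cong) (auto simp: D_def algebra_simps)
      also have "\<dots> = d * (\<Sum>l\<in>UNIV. A$i$l * A$j$l) - \<gamma> * A$i$k * A$j$k"
        by (simp add: sum_subtractf sum_distrib_left)
      also have "\<dots> = (if i = j then d else 0) - \<gamma> * \<nu>$i * \<nu>$j"
        by (simp add: rows_orthonormal Ak)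
      finally show ?thesis .
    qed
    thus ?thesis by (simp add: vec_eq_iff)
  qed
  have "det A * det A = 1"
    using det_orthogonal_matrix[OF A(1)] by auto
  hence "det (A ** D ** transpose A) = det D"
    by (simp add: det_mul)
  also have "det D = (\<Prod>i\<in>UNIV. D$i$i)"
    by (rule det_diagonal) (simp add: D_def)
  also have "\<dots> = (d - \<gamma>) * (\<Prod>i\<in>UNIV - {k}. d)"
    by (simp add: prod.remove[of UNIV k] D_def)
  also have "\<dots> = d ^ (CARD('n) - 1) * (d - \<gamma>)"
    by (simp add: card_Diff_singleton)
  finally show ?thesis using diagonalized by simp
qed

lemma eigenvalues_mset_scaled_id_plus_rank_one:
  fixes \<nu> :: "real^'n"
  assumes "norm \<nu> = 1"
  shows "eigenvalues_mset (scaled_id_plus_rank_one \<alpha> \<gamma> \<nu>)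
           = replicate_mset (CARD('n) - 1) \<alpha> + {#\<alpha> + \<gamma>#}"
proof -
  let ?M = "scaled_id_plus_rank_one \<alpha> \<gamma> \<nu>"
  have "charpoly ?M = [:-\<alpha>, 1:] ^ (CARD('n) - 1) * [:-(\<alpha> + \<gamma>), 1:]"
  proof (rule poly_eq_poly_eq_iff[THEN iffD1], rule ext)
    fix x :: real
    have "poly (charpoly ?M) x = det (\<chi> i j. (if i = j then x - \<alpha> else 0) - \<gamma> * \<nu>$i * \<nu>$j)"
      unfolding charpoly_def poly_det scaled_id_plus_rank_one_def
      by (rule arg_cong[where f=det]) (simp add: vec_eq_iff)
    also have "\<dots> = (x - \<alpha>) ^ (CARD('n) - 1) * (x - \<alpha> - \<gamma>)"
      by (rule det_scaled_id_minus_rank_one[OF assms])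
    finally show "poly (charpoly ?M) x = poly ([:-\<alpha>, 1:] ^ (CARD('n) - 1) * [:-(\<alpha> + \<gamma>), 1:]) x"
      by (simp add: algebra_simps)
  qed
  hence "proots (charpoly ?M) = proots ([:-\<alpha>, 1:] ^ (CARD('n) - 1)) + proots [:-(\<alpha> + \<gamma>), 1:]"
    by (simp only:) (rule proots_mult; simp)
  hence "proots (charpoly ?M) = repeat_mset (CARD('n) - 1) {#\<alpha>#} + {#\<alpha> + \<gamma>#}"
    by (simp only: proots_power proots_linear_factor minus_minus)
  thus ?thesis unfolding eigenvalues_mset_def by simp
qed

lemma filter_mset_replicate_mset:
  "filter_mset P (replicate_mset n a) = (if P a then replicate_mset n a else {#})"
  by (induction n) auto

lemma pucci_plus_scaled_id_plus_rank_one: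
  fixes \<nu> :: "real^'n"
  assumes "norm \<nu> = 1" "\<alpha> > 0" "\<alpha> + \<gamma> < 0"
  shows "pucci_plus lam Lam (scaled_id_plus_rank_one \<alpha> \<gamma> \<nu>)
           = Lam * (real (CARD('n) - 1) * \<alpha>) + lam * (\<alpha> + \<gamma>)"
  unfolding pucci_plus_def eigenvalues_mset_scaled_id_plus_rank_one[OF assms(1)]
  using assms(2,3) by (simp add: filter_mset_replicate_mset)

lemma pucci_minus_scaled_id_plus_rank_one:
  fixes \<nu> :: "real^'n"
  assumes "norm \<nu> = 1" "\<alpha> < 0" "\<alpha> + \<gamma> > 0"
  shows "pucci_minus lam Lam (scaled_id_plus_rank_one \<alpha> \<gamma> \<nu>)
           = lam * (\<alpha> + \<gamma>) + Lam * (real (CARD('n) - 1) * \<alpha>)"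
  unfolding pucci_minus_def eigenvalues_mset_scaled_id_plus_rank_one[OF assms(1)]
  using assms(2,3) by (simp add: filter_mset_replicate_mset)

lemma C2_test_quadratic:
  fixes \<nu> :: "real^'n"
  shows "C2_test (\<lambda>x. \<alpha>/2 * (x \<bullet> x) + \<gamma>/2 * (x \<bullet> \<nu>)^2 + b * (x \<bullet> \<nu>) + c)
           (\<lambda>x. \<alpha> *\<^sub>R x + (\<gamma> * (x \<bullet> \<nu>) + b) *\<^sub>R \<nu>)
           (\<lambda>x. scaled_id_plus_rank_one \<alpha> \<gamma> \<nu>)"
  unfolding C2_test_def
proof (intro conjI allI)
  fix x :: "real^'n"
  show "((\<lambda>x. \<alpha>/2 * (x \<bullet> x) + \<gamma>/2 * (x \<bullet> \<nu>)^2 + b * (x \<bullet> \<nu>) + c) has_derivative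
        (\<lambda>h. (\<alpha> *\<^sub>R x + (\<gamma> * (x \<bullet> \<nu>) + b) *\<^sub>R \<nu>) \<bullet> h)) (at x)"
    by (rule derivative_eq_intros refl | simp)+
       (auto simp: algebra_simps inner_commute fun_eq_iff)
  have "((\<lambda>x. \<alpha> *\<^sub>R x + (\<gamma> * (x \<bullet> \<nu>) + b) *\<^sub>R \<nu>) has_derivative
        (\<lambda>h. \<alpha> *\<^sub>R h + (\<gamma> * (h \<bullet> \<nu>)) *\<^sub>R \<nu>)) (at x)"
    by (rule derivative_eq_intros refl | simp)+
  moreover have "\<alpha> *\<^sub>R h + (\<gamma> * (h \<bullet> \<nu>)) *\<^sub>R \<nu> = scaled_id_plus_rank_one \<alpha> \<gamma> \<nu> *v h" for h
  proof -
    have "(\<Sum>j\<in>UNIV. (\<alpha> * (if i = j then 1 else 0) + \<gamma> * \<nu>$i * \<nu>$j) * h$j)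
        = (\<Sum>j\<in>UNIV. (if i = j then \<alpha> * h$j else 0)) + \<gamma> * \<nu>$i * (\<Sum>j\<in>UNIV. \<nu>$j * h$j)" for i
      by (simp add: distrib_right sum.distrib sum_distrib_left mult.assoc)
         (simp add: sum_distrib_left[symmetric] of_bool_def[symmetric])
    thus ?thesis
      by (simp add: scaled_id_plus_rank_one_def vec_eq_iff matrix_vector_mult_def inner_vec_def
          mult.commute mult.left_commute)
  qed
  ultimately show "((\<lambda>x. \<alpha> *\<^sub>R x + (\<gamma> * (x \<bullet> \<nu>) + b) *\<^sub>R \<nu>) has_derivative
        (\<lambda>h. scaled_id_plus_rank_one \<alpha> \<gamma> \<nu> *v h)) (at x)"
    by simp
qed simp

lemma norm_tang_squared:
  fixes \<nu> x :: "real^'n"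
  assumes "norm \<nu> = 1"
  shows "(norm (tang \<nu> x))^2 = x \<bullet> x - (x \<bullet> \<nu>)^2"
proof -
  have "\<nu> \<bullet> \<nu> = 1" using assms by (metis norm_eq_1)
  have "(norm (tang \<nu> x))^2 = (x - (x \<bullet> \<nu>) *\<^sub>R \<nu>) \<bullet> (x - (x \<bullet> \<nu>) *\<^sub>R \<nu>)"
    by (simp add: tang_def power2_norm_eq_inner)
  also have "\<dots> = x \<bullet> x - (x \<bullet> \<nu>)^2"
    by (simp add: inner_diff_left inner_diff_right \<open>\<nu> \<bullet> \<nu> = 1\<close> inner_commute power2_eq_square)
  finally show ?thesis .
qed

lemma continuous_on_norm_tang: "continuous_on A (\<lambda>x. norm (tang \<nu> x))"
  unfolding tang_def by (intro continuous_intros)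

lemma interior_SigmaR:
  fixes \<nu> x :: "real^'n"
  assumes "-1 < x \<bullet> \<nu>" "x \<bullet> \<nu> < 0" "norm (tang \<nu> x) < R"
  shows "x \<in> interior (SigmaR \<nu> R)"
proof -
  let ?U = "{x. -1 < x \<bullet> \<nu>} \<inter> {x. x \<bullet> \<nu> < 0} \<inter> {x. norm (tang \<nu> x) < R}"
  have "open ?U"
    by (intro open_Int open_Collect_less continuous_intros continuous_on_norm_tang)
  moreover have "?U \<subseteq> SigmaR \<nu> R" by (auto simp: SigmaR_def slab_def)
  ultimately have "?U \<subseteq> interior (SigmaR \<nu> R)" by (rule interior_maximal[rotated])
  thus ?thesis using assms by auto
qed

lemma SigmaR_cases:
  assumes "x \<in> SigmaR \<nu> R"
  obtains "x \<in> GammaD \<nu>" | "x \<in> GammaN \<nu>" | "R \<le> norm (tang \<nu> x)" | "x \<in> interior (SigmaR \<nu> R)"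
proof (cases "x \<bullet> \<nu> = -1 \<or> x \<bullet> \<nu> = 0 \<or> R \<le> norm (tang \<nu> x)")
  case True
  thus ?thesis using that(1-3) by (auto simp: GammaD_def GammaN_def)
next
  case False
  moreover have "-1 \<le> x \<bullet> \<nu>" "x \<bullet> \<nu> \<le> 0" using assms by (auto simp: SigmaR_def slab_def)
  ultimately show ?thesis by (intro that(4) interior_SigmaR) auto
qed

lemma compact_SigmaR:
  fixes \<nu> :: "real^'n"
  assumes "norm \<nu> = 1"
  shows "compact (SigmaR \<nu> R)"
proof -
  have "SigmaR \<nu> R = {x. -1 \<le> x \<bullet> \<nu>} \<inter> {x. x \<bullet> \<nu> \<le> 0} \<inter> {x. norm (tang \<nu> x) \<le> R}"
    by (auto simp: SigmaR_def slab_def)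
  also have "closed \<dots>"
    by (intro closed_Int closed_Collect_le continuous_intros continuous_on_norm_tang)
  finally have "closed (SigmaR \<nu> R)" .
  moreover have "norm x \<le> R + 1" if x: "x \<in> SigmaR \<nu> R" for x
  proof -
    have "x = tang \<nu> x + (x \<bullet> \<nu>) *\<^sub>R \<nu>" by (simp add: tang_def)
    hence "norm x \<le> norm (tang \<nu> x) + norm ((x \<bullet> \<nu>) *\<^sub>R \<nu>)" by (metis norm_triangle_ineq)
    also have "\<dots> \<le> R + 1" using x assms by (auto simp: SigmaR_def slab_def)
    finally show ?thesis .
  qed
  hence "bounded (SigmaR \<nu> R)" unfolding bounded_iff by blast
  ultimately show ?thesis by (simp add: compact_eq_bounded_closed)
qed

definition barrier :: "real^'n \<Rightarrow> real \<Rightarrow> real \<Rightarrow> real^'n \<Rightarrow> real" where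
  "barrier \<nu> a K x = a * (norm (tang \<nu> x))^2 + K/2 * (1 - (x \<bullet> \<nu>)^2) + a * (1 + x \<bullet> \<nu>)"

lemma continuous_on_barrier: "continuous_on A (barrier \<nu> a K)"
  unfolding barrier_def tang_def by (intro continuous_intros)

lemma barrier_ge:
  assumes "x \<in> slab \<nu>" "0 \<le> a" "0 \<le> K"
  shows "a * (norm (tang \<nu> x))^2 \<le> barrier \<nu> a K x"
proof -
  have "0 \<le> 1 - (x \<bullet> \<nu>)^2" "0 \<le> 1 + x \<bullet> \<nu>"
    using assms(1) abs_le_square_iff[of "x \<bullet> \<nu>" 1] by (auto simp: slab_def)
  thus ?thesis using assms(2,3) by (simp add: barrier_def)
qed

lemma barrier_nonneg:
  assumes "x \<in> slab \<nu>" "0 \<le> a" "0 \<le> K"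
  shows "0 \<le> barrier \<nu> a K x"
  using barrier_ge[OF assms] assms(2) by (meson order_trans mult_nonneg_nonneg zero_le_power2)

lemma barrier_le:
  assumes "x \<in> slab \<nu>" "norm (tang \<nu> x) \<le> 1" "0 \<le> a" "0 \<le> K"
  shows "barrier \<nu> a K x \<le> 2 * a + K / 2"
proof -
  have "(norm (tang \<nu> x))^2 \<le> 1" using assms(2) by (simp add: power_le_one)
  hence "a * (norm (tang \<nu> x))^2 \<le> a" using assms(3) by (simp add: mult_left_le)
  moreover have "K/2 * (1 - (x \<bullet> \<nu>)^2) \<le> K/2" using assms(4) by (simp add: mult_left_le)
  moreover have "a * (1 + x \<bullet> \<nu>) \<le> a" using assms(1,3) by (simp add: slab_def mult_left_le)
  ultimately show ?thesis unfolding barrier_def by linarith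
qed

lemma barrier_quadratic:
  fixes \<nu> :: "real^'n"
  assumes "norm \<nu> = 1"
  shows "barrier \<nu> a K = (\<lambda>x. (2*a)/2 * (x \<bullet> x) + (-(2*a + K))/2 * (x \<bullet> \<nu>)^2 + a * (x \<bullet> \<nu>) + (K/2 + a))"
proof
  fix x :: "real^'n"
  have "\<And>u t. a * (u - t^2) + K/2 * (1 - t^2) + a * (1 + t)
      = (2*a)/2 * u + (-(2*a + K))/2 * t^2 + a * t + (K/2 + a)"
    by (simp add: field_simps)
  thus "barrier \<nu> a K x = (2*a)/2 * (x \<bullet> x) + (-(2*a + K))/2 * (x \<bullet> \<nu>)^2 + a * (x \<bullet> \<nu>) + (K/2 + a)"
    unfolding barrier_def norm_tang_squared[OF assms] .
qed

lemma C2_test_barrier: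
  fixes \<nu> :: "real^'n"
  assumes "norm \<nu> = 1"
  shows "C2_test (barrier \<nu> a K) (\<lambda>x. (2*a) *\<^sub>R x + (-(2*a + K) * (x \<bullet> \<nu>) + a) *\<^sub>R \<nu>)
           (\<lambda>x. scaled_id_plus_rank_one (2*a) (-(2*a + K)) \<nu>)"
  unfolding barrier_quadratic[OF assms] by (rule C2_test_quadratic)

lemma C2_test_neg_barrier:
  fixes \<nu> :: "real^'n"
  assumes "norm \<nu> = 1"
  shows "C2_test (\<lambda>x. - barrier \<nu> a K x) (\<lambda>x. (-2*a) *\<^sub>R x + ((2*a + K) * (x \<bullet> \<nu>) + -a) *\<^sub>R \<nu>)
           (\<lambda>x. scaled_id_plus_rank_one (-2*a) (2*a + K) \<nu>)"
proof -
  have "(\<lambda>x. - barrier \<nu> a K x)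
      = (\<lambda>x. (-2*a)/2 * (x \<bullet> x) + (2*a + K)/2 * (x \<bullet> \<nu>)^2 + -a * (x \<bullet> \<nu>) + -(K/2 + a))"
    by (simp add: barrier_quadratic[OF assms] fun_eq_iff algebra_simps) (simp add: field_simps)
  thus ?thesis by (simp only: C2_test_quadratic)
qed

lemma viscosity_subsolution_le_barrier:
  fixes \<nu> :: "real^'n"
  assumes nu: "norm \<nu> = 1" and a: "0 < a" and K: "0 < K"
    and K_large: "2 * a * Lam * real (CARD('n) - 1) < lam * K"
    and cont: "continuous_on (SigmaR \<nu> R) w"
    and sub: "visc_sub_Pplus lam Lam (SigmaR \<nu> R) w"
    and neu: "visc_neumann \<nu> (SigmaR \<nu> R) (GammaN \<nu> \<inter> SigmaR \<nu> R) w"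
    and dir: "\<forall>x\<in>GammaD \<nu> \<inter> SigmaR \<nu> R. w x = 0"
    and lateral: "\<forall>x\<in>SigmaR \<nu> R. w x \<le> a * R^2"
    and x: "x \<in> SigmaR \<nu> R"
  shows "w x \<le> barrier \<nu> a K x"
proof -
  let ?S = "SigmaR \<nu> R" and ?\<psi> = "barrier \<nu> a K"
  let ?D\<psi> = "\<lambda>x. (2*a) *\<^sub>R x + (-(2*a + K) * (x \<bullet> \<nu>) + a) *\<^sub>R \<nu>"
  have "?S \<noteq> {}" using x by blast
  then obtain y where y: "y \<in> ?S" and y_max: "\<forall>z\<in>?S. w z - ?\<psi> z \<le> w y - ?\<psi> y"
    using continuous_attains_sup[OF compact_SigmaR[OF nu] _ continuous_on_diff[OF cont continuous_on_barrier]]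
    by blast
  have touch: "touches_above ?S w ?\<psi> y"
    unfolding touches_above_def using y_max by (intro exI[of _ 1]) auto
  have y_slab: "y \<in> slab \<nu>" using y by (simp add: SigmaR_def)
  have "w y \<le> ?\<psi> y"
    using y
  proof (cases rule: SigmaR_cases)
    case 1
    hence "w y = 0" using dir y by blast
    thus ?thesis using barrier_nonneg[OF y_slab] a K by simp
  next
    case 2
    have "?D\<psi> y \<bullet> \<nu> \<le> 0"
      using y 2 by (intro neu[unfolded visc_neumann_def, THEN conjunct1, rule_format,
          OF _ conjI[OF C2_test_barrier[OF nu] touch]]) blast
    moreover have "?D\<psi> y \<bullet> \<nu> = a"
      using 2 nu by (simp add: GammaN_def inner_add_left norm_eq_1)
    ultimately show ?thesis using a by simp
  next
    case 3
    have "0 \<le> R" using y by (auto simp: SigmaR_def intro: order_trans[OF norm_ge_zero])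
    hence "a * R^2 \<le> a * (norm (tang \<nu> y))^2"
      using 3 a by (intro mult_left_mono power_mono) auto
    moreover have "w y \<le> a * R^2" using lateral y by blast
    ultimately show ?thesis using barrier_ge[OF y_slab less_imp_le[OF a] less_imp_le[OF K]] by linarith
  next
    case 4
    have "- pucci_plus lam Lam (scaled_id_plus_rank_one (2*a) (-(2*a + K)) \<nu>) \<le> 0"
      using sub[unfolded visc_sub_Pplus_def, rule_format, OF 4 conjI[OF C2_test_barrier[OF nu] touch]]
      by simp
    moreover have "pucci_plus lam Lam (scaled_id_plus_rank_one (2*a) (-(2*a + K)) \<nu>)
                     = 2 * a * Lam * real (CARD('n) - 1) - lam * K"
      using a K by (subst pucci_plus_scaled_id_plus_rank_one[OF nu]) (auto simp: algebra_simps)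
    ultimately show ?thesis using K_large by simp
  qed
  moreover have "w x - ?\<psi> x \<le> w y - ?\<psi> y" using y_max x by blast
  ultimately show ?thesis by linarith
qed

lemma viscosity_supersolution_ge_neg_barrier:
  fixes \<nu> :: "real^'n"
  assumes nu: "norm \<nu> = 1" and a: "0 < a" and K: "0 < K"
    and K_large: "2 * a * Lam * real (CARD('n) - 1) < lam * K"
    and cont: "continuous_on (SigmaR \<nu> R) w"
    and super: "visc_super_Pminus lam Lam (SigmaR \<nu> R) w"
    and neu: "visc_neumann \<nu> (SigmaR \<nu> R) (GammaN \<nu> \<inter> SigmaR \<nu> R) w"
    and dir: "\<forall>x\<in>GammaD \<nu> \<inter> SigmaR \<nu> R. w x = 0"
    and lateral: "\<forall>x\<in>SigmaR \<nu> R. - (a * R^2) \<le> w x"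
    and x: "x \<in> SigmaR \<nu> R"
  shows "- barrier \<nu> a K x \<le> w x"
proof -
  let ?S = "SigmaR \<nu> R" and ?\<phi> = "\<lambda>x. - barrier \<nu> a K x"
  let ?D\<phi> = "\<lambda>x. (-2*a) *\<^sub>R x + ((2*a + K) * (x \<bullet> \<nu>) + -a) *\<^sub>R \<nu>"
  have "continuous_on ?S ?\<phi>" by (intro continuous_intros continuous_on_barrier)
  moreover have "?S \<noteq> {}" using x by blast
  ultimately obtain y where y: "y \<in> ?S" and y_min: "\<forall>z\<in>?S. w y - ?\<phi> y \<le> w z - ?\<phi> z"
    using continuous_attains_inf[OF compact_SigmaR[OF nu] _ continuous_on_diff[OF cont]]
    by blast
  have touch: "touches_below ?S w ?\<phi> y"
    unfolding touches_below_def using y_min by (intro exI[of _ 1]) auto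
  have y_slab: "y \<in> slab \<nu>" using y by (simp add: SigmaR_def)
  have "?\<phi> y \<le> w y"
    using y
  proof (cases rule: SigmaR_cases)
    case 1
    hence "w y = 0" using dir y by blast
    thus ?thesis using barrier_nonneg[OF y_slab] a K by simp
  next
    case 2
    have "?D\<phi> y \<bullet> \<nu> \<ge> 0"
      using y 2 by (intro neu[unfolded visc_neumann_def, THEN conjunct2, rule_format,
          OF _ conjI[OF C2_test_neg_barrier[OF nu] touch]]) blast
    moreover have "?D\<phi> y \<bullet> \<nu> = - a"
      using 2 nu by (simp add: GammaN_def inner_add_left inner_diff_left norm_eq_1)
    ultimately show ?thesis using a by simp
  next
    case 3
    have "0 \<le> R" using y by (auto simp: SigmaR_def intro: order_trans[OF norm_ge_zero])
    hence "a * R^2 \<le> a * (norm (tang \<nu> y))^2"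
      using 3 a by (intro mult_left_mono power_mono) auto
    moreover have "- (a * R^2) \<le> w y" using lateral y by blast
    ultimately show ?thesis using barrier_ge[OF y_slab less_imp_le[OF a] less_imp_le[OF K]] by linarith
  next
    case 4
    have "- pucci_minus lam Lam (scaled_id_plus_rank_one (-2*a) (2*a + K) \<nu>) \<ge> 0"
      using super[unfolded visc_super_Pminus_def, rule_format, OF 4 conjI[OF C2_test_neg_barrier[OF nu] touch]]
      by simp
    moreover have "pucci_minus lam Lam (scaled_id_plus_rank_one (-2*a) (2*a + K) \<nu>)
                     = lam * K - 2 * a * Lam * real (CARD('n) - 1)"
      using a K by (subst pucci_minus_scaled_id_plus_rank_one[OF nu]) (auto simp: algebra_simps)
    ultimately show ?thesis using K_large by simp
  qed
  moreover have "w y - ?\<phi> y \<le> w x - ?\<phi> x" using y_min x by blast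
  ultimately show ?thesis by linarith
qed

lemma viscosity_solution_abs_le_barrier:
  fixes \<nu> :: "real^'n"
  assumes nu: "norm \<nu> = 1" and a: "0 < a" and K: "0 < K"
    and K_large: "2 * a * Lam * real (CARD('n) - 1) < lam * K"
    and cont: "continuous_on (SigmaR \<nu> R) w"
    and sub: "visc_sub_Pplus lam Lam (SigmaR \<nu> R) w"
    and super: "visc_super_Pminus lam Lam (SigmaR \<nu> R) w"
    and neu: "visc_neumann \<nu> (SigmaR \<nu> R) (GammaN \<nu> \<inter> SigmaR \<nu> R) w"
    and dir: "\<forall>x\<in>GammaD \<nu> \<inter> SigmaR \<nu> R. w x = 0"
    and bound: "\<forall>x\<in>SigmaR \<nu> R. \<bar>w x\<bar> \<le> a * R^2"
    and x: "x \<in> SigmaR \<nu> R"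
  shows "\<bar>w x\<bar> \<le> barrier \<nu> a K x"
proof -
  have "\<forall>z\<in>SigmaR \<nu> R. w z \<le> a * R^2" "\<forall>z\<in>SigmaR \<nu> R. - (a * R^2) \<le> w z"
    using bound by (auto simp: abs_le_iff)
  thus ?thesis
    using viscosity_subsolution_le_barrier[OF nu a K K_large cont sub neu dir _ x]
      viscosity_supersolution_ge_neg_barrier[OF nu a K K_large cont super neu dir _ x]
    by (simp add: abs_le_iff)
qed

theorem corollary2p10:
  fixes lam Lam :: real
  assumes "0 < lam" and "lam < Lam"
  shows "\<exists>C>0. \<forall>(\<nu>::real^'n) (R::real) (\<epsilon>::real) (w::real^'n \<Rightarrow> real).
           norm \<nu> = 1 \<longrightarrow> 0 < R \<longrightarrow> 0 < \<epsilon> \<longrightarrow>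
           continuous_on (SigmaR \<nu> R) w \<longrightarrow>
           visc_sub_Pplus lam Lam (SigmaR \<nu> R) w \<longrightarrow>
           visc_super_Pminus lam Lam (SigmaR \<nu> R) w \<longrightarrow>
           visc_neumann \<nu> (SigmaR \<nu> R) (GammaN \<nu> \<inter> SigmaR \<nu> R) w \<longrightarrow>
           (\<forall>x\<in>GammaD \<nu> \<inter> SigmaR \<nu> R. w x = 0) \<longrightarrow>
           (\<forall>x\<in>SigmaR \<nu> R. \<bar>w x\<bar> \<le> R powr (2 - \<epsilon>)) \<longrightarrow>
           (\<forall>x\<in>SigmaR \<nu> R. norm (tang \<nu> x) \<le> 1 \<longrightarrow> \<bar>w x\<bar> \<le> C * R powr (- \<epsilon>))"
proof -
  define n where "n = real CARD('n)"
  have n: "1 \<le> n" "real (CARD('n) - 1) = n - 1" by (simp_all add: n_def)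
  show ?thesis
  proof (intro exI[of _ "2 + 2 * Lam * n / lam"] conjI allI impI ballI)
    show "0 < 2 + 2 * Lam * n / lam" using assms n by (simp add: add_pos_nonneg)
  next
    fix \<nu> :: "real^'n" and R \<epsilon> :: real and w :: "real^'n \<Rightarrow> real" and x :: "real^'n"
    assume nu: "norm \<nu> = 1" and R: "0 < R" and "0 < \<epsilon>"
      and cont: "continuous_on (SigmaR \<nu> R) w"
      and sub: "visc_sub_Pplus lam Lam (SigmaR \<nu> R) w"
      and super: "visc_super_Pminus lam Lam (SigmaR \<nu> R) w"
      and neu: "visc_neumann \<nu> (SigmaR \<nu> R) (GammaN \<nu> \<inter> SigmaR \<nu> R) w"
      and dir: "\<forall>x\<in>GammaD \<nu> \<inter> SigmaR \<nu> R. w x = 0"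
      and bound: "\<forall>x\<in>SigmaR \<nu> R. \<bar>w x\<bar> \<le> R powr (2 - \<epsilon>)"
      and x: "x \<in> SigmaR \<nu> R" "norm (tang \<nu> x) \<le> 1"
    define a where "a = R powr (- \<epsilon>)"
    define K where "K = 4 * a * Lam * n / lam"
    have a: "0 < a" using R by (simp add: a_def)
    hence K: "0 < K" unfolding K_def using assms n(1) by (intro divide_pos_pos mult_pos_pos) auto
    have "0 < a * Lam * (n + 1)" using a assms n(1) by simp
    hence K_large: "2 * a * Lam * real (CARD('n) - 1) < lam * K"
      using assms unfolding K_def n(2) by (simp add: algebra_simps)
    have "R powr (2 - \<epsilon>) = a * R powr 2"
      unfolding a_def by (subst powr_add[symmetric]) simp
    also have "R powr 2 = R^2" using R by simp
    finally have aR: "R powr (2 - \<epsilon>) = a * R^2" .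
    have "\<bar>w x\<bar> \<le> barrier \<nu> a K x"
      using bound unfolding aR
      by (intro viscosity_solution_abs_le_barrier[OF nu a K K_large cont sub super neu dir _ x(1)])
    also have "\<dots> \<le> 2 * a + K / 2"
      using x a K by (intro barrier_le) (auto simp: SigmaR_def)
    also have "\<dots> = (2 + 2 * Lam * n / lam) * R powr (- \<epsilon>)"
      using assms by (simp add: K_def a_def field_simps)
    finally show "\<bar>w x\<bar> \<le> (2 + 2 * Lam * n / lam) * R powr (- \<epsilon>)" .
  qed
qed

end
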